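(* Let $R$ be a t-unital ring. Then the functor $\mathrm{Hom}_R(R,{-})$, from the category of all (nonunital) left $R$-modules to the full subcategory of c-unital left $R$-modules, is left adjoint to the fully faithful inclusion of c-unital left $R$-modules into all left $R$-modules. For any left $R$-module $P$, the natural map $P\to\mathrm{Hom}_R(R,P)$, $p\mapsto(r\mapsto rp)$, is the adjunction unit.
   Context: Rings are associative, not necessarily unital; modules are not assumed unital. $R$ is t-unital if $R\otimes_R R\to R$ is an isomorphism. $\mathrm{Hom}_R$ denotes left $R$-module homomorphisms, and $\mathrm{Hom}_R(R,P)$ is a left $R$-module via the right action of $R$ on itself. A left $R$-module $P$ is c-unital if the natural map $P\to\mathrm{Hom}_R(R,P)$ is an isomorphism. *)

theory Defs
  imports Main "HOL-Library.Poly_Mapping" "HOL-Library.Function_Algebras"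
begin

text \<open>Nonunital rings: the type class ring (associative, no unit required).
  Left modules over R: a subgroup M of an ambient abelian group type,
  with an action act satisfying the (nonunital) module axioms on M.\<close>

definition lmodule :: "'m::ab_group_add set \<Rightarrow> ('r::ring \<Rightarrow> 'm \<Rightarrow> 'm) \<Rightarrow> bool" where
  "lmodule M act \<longleftrightarrow>
     0 \<in> M \<and> (\<forall>x\<in>M. \<forall>y\<in>M. x + y \<in> M) \<and> (\<forall>x\<in>M. - x \<in> M) \<and>
     (\<forall>r. \<forall>x\<in>M. act r x \<in> M) \<and>
     (\<forall>r. \<forall>x\<in>M. \<forall>y\<in>M. act r (x + y) = act r x + act r y) \<and>
     (\<forall>r s. \<forall>x\<in>M. act (r + s) x = act r x + act s x) \<and>
     (\<forall>r s. \<forall>x\<in>M. act (r * s) x = act r (act s x))"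

definition module_hom ::
  "'m::ab_group_add set \<Rightarrow> ('r::ring \<Rightarrow> 'm \<Rightarrow> 'm) \<Rightarrow>
   'n::ab_group_add set \<Rightarrow> ('r \<Rightarrow> 'n \<Rightarrow> 'n) \<Rightarrow> ('m \<Rightarrow> 'n) \<Rightarrow> bool" where
  "module_hom M actM N actN f \<longleftrightarrow>
     (\<forall>x\<in>M. f x \<in> N) \<and> (\<forall>x\<in>M. \<forall>y\<in>M. f (x + y) = f x + f y) \<and>
     (\<forall>r. \<forall>x\<in>M. f (actM r x) = actN r (f x))"

definition HomR :: "'m::ab_group_add set \<Rightarrow> ('r::ring \<Rightarrow> 'm \<Rightarrow> 'm) \<Rightarrow> ('r \<Rightarrow> 'm) set" where
  "HomR P act = {\<phi>. module_hom (UNIV :: 'r set) (\<lambda>a r. a * r) P act \<phi>}"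

text \<open>Left R-action on Hom_R(R,P) induced by the right action of R on itself.\<close>
definition homact :: "'r::ring \<Rightarrow> ('r \<Rightarrow> 'm) \<Rightarrow> ('r \<Rightarrow> 'm)" where
  "homact a \<phi> = (\<lambda>r. \<phi> (r * a))"

definition eta :: "('r::ring \<Rightarrow> 'm \<Rightarrow> 'm) \<Rightarrow> 'm \<Rightarrow> ('r \<Rightarrow> 'm)" where
  "eta act p = (\<lambda>r. act r p)"

definition c_unital :: "'m::ab_group_add set \<Rightarrow> ('r::ring \<Rightarrow> 'm \<Rightarrow> 'm) \<Rightarrow> bool" where
  "c_unital P act \<longleftrightarrow> lmodule P act \<and> bij_betw (eta act) P (HomR P act)"

text \<open>Tensor product R \<otimes>_R R presented as the free abelian group Z[R x R]
  modulo the subgroup generated by bilinearity and balancing relations.\<close>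
inductive_set tens_rel :: "('r::ring \<times> 'r \<Rightarrow>\<^sub>0 int) set" where
  zero: "0 \<in> tens_rel"
| addl: "Poly_Mapping.single (r + r', s) 1 - Poly_Mapping.single (r, s) 1
           - Poly_Mapping.single (r', s) 1 \<in> tens_rel"
| addr: "Poly_Mapping.single (r, s + s') 1 - Poly_Mapping.single (r, s) 1
           - Poly_Mapping.single (r, s') 1 \<in> tens_rel"
| bal: "Poly_Mapping.single (r * a, s) 1 - Poly_Mapping.single (r, a * s) 1 \<in> tens_rel"
| add: "x \<in> tens_rel \<Longrightarrow> y \<in> tens_rel \<Longrightarrow> x + y \<in> tens_rel"
| neg: "x \<in> tens_rel \<Longrightarrow> - x \<in> tens_rel"

definition zmult :: "int \<Rightarrow> 'a::ab_group_add \<Rightarrow> 'a" where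
  "zmult k a = (if 0 \<le> k then (\<Sum>_<nat k. a) else - (\<Sum>_<nat (- k). a))"

definition tens_mult :: "('r::ring \<times> 'r \<Rightarrow>\<^sub>0 int) \<Rightarrow> 'r" where
  "tens_mult x = (\<Sum>p\<in>Poly_Mapping.keys x. zmult (Poly_Mapping.lookup x p) (fst p * snd p))"

text \<open>t-unital: the induced map R \<otimes>_R R \<rightarrow> R (on the quotient by tens_rel)
  is well defined and bijective.\<close>
definition t_unital :: "'r::ring itself \<Rightarrow> bool" where
  "t_unital _ \<longleftrightarrow>
     (\<forall>y::'r. \<exists>x. tens_mult x = y) \<and>
     (\<forall>x y :: ('r \<times> 'r \<Rightarrow>\<^sub>0 int). tens_mult x = tens_mult y \<longleftrightarrow> x - y \<in> tens_rel)"

end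

theory Submission
  imports Defs
begin

text \<open>Since R is t-unital, every element of R is a sum of products, and additive maps out of R
  correspond to R-balanced biadditive maps on R \<times> R. An element \<Psi> of
  Hom_R(R, Hom_R(R,P)) gives the balanced map (r, s) \<mapsto> \<Psi> s r, hence an additive
  \<phi> : R \<rightarrow> P with \<phi> (r s) = \<Psi> s r; one checks \<phi> \<in> Hom_R(R,P) and \<Psi> = \<eta> \<phi>, and \<eta> is
  injective because maps agreeing on products agree. So Hom_R(R,P) is c-unital.
  For the adjunction, the action of a on \<phi> \<in> Hom_R(R,P) is \<eta> (\<phi> a); hence every module map g
  out of Hom_R(R,P) satisfies \<eta> (g \<phi>) = g \<circ> \<eta> \<circ> \<phi>. For c-unital Q this forces
  g \<phi> = \<eta>\<inverse> (f \<circ> \<phi>) with \<eta> : Q \<rightarrow> Hom_R(R,Q), and this formula does define a module map.\<close>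

text \<open>The locale additive of HOL.Modules cannot be used here: importing that theory would
  shadow module_hom.\<close>

definition additive :: "('a::ab_group_add \<Rightarrow> 'b::ab_group_add) \<Rightarrow> bool" where
  "additive f \<longleftrightarrow> (\<forall>x y. f (x + y) = f x + f y)"

lemma additive_add: "additive f \<Longrightarrow> f (x + y) = f x + f y"
  by (simp add: additive_def)

lemma additive_zero: "additive f \<Longrightarrow> f 0 = 0"
  using additive_add[of f 0 0] by simp

lemma additive_diff: "additive f \<Longrightarrow> f (x - y) = f x - f y"
  using additive_add[of f "x - y" y] by (simp add: eq_diff_eq)

lemma additive_minus: "additive f \<Longrightarrow> f (- x) = - f x"
  using additive_diff[of f 0 x] by (simp add: additive_zero)

subsection \<open>Integer multiples and the free abelian group\<close>

lemma zmult_0 [simp]: "zmult 0 a = 0"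
  by (simp add: zmult_def)

lemma zmult_1 [simp]: "zmult 1 a = a"
  by (simp add: zmult_def)

lemma zmult_add1: "zmult (k + 1) a = zmult k a + a"
proof (cases "0 \<le> k")
  case True
  then have "nat (k + 1) = Suc (nat k)" by simp
  with True show ?thesis by (simp add: zmult_def add.commute)
next
  case negative: False
  show ?thesis
  proof (cases "k = -1")
    case True
    then show ?thesis by (simp add: zmult_def)
  next
    case False
    with negative have "nat (- k) = Suc (nat (- (k + 1)))" by simp
    with negative False show ?thesis by (simp add: zmult_def)
  qed
qed

lemma zmult_add: "zmult (k + l) a = zmult k a + zmult l a"
proof (induction l rule: int_induct[where k = 0])
  case base
  then show ?case by simp
next
  case (step1 i)
  have "zmult (k + (i + 1)) a = zmult (k + i) a + a"
    using zmult_add1[of "k + i" a] by (simp add: ac_simps)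
  also have "\<dots> = zmult k a + zmult (i + 1) a"
    using step1 by (simp add: zmult_add1 add.assoc)
  finally show ?case .
next
  case (step2 i)
  have "zmult (k + (i - 1)) a = zmult (k + i) a - a"
    using zmult_add1[of "k + i - 1" a] by (simp add: algebra_simps)
  also have "\<dots> = zmult k a + zmult (i - 1) a"
    using step2 zmult_add1[of "i - 1" a] by simp
  finally show ?case .
qed

text \<open>The additive extension of g to the free abelian group on I; the library's frag_extend
  only allows free abelian groups as targets.\<close>

definition frag_lift :: "('i \<Rightarrow> 'a::ab_group_add) \<Rightarrow> ('i \<Rightarrow>\<^sub>0 int) \<Rightarrow> 'a" where
  "frag_lift g x = (\<Sum>i\<in>Poly_Mapping.keys x. zmult (Poly_Mapping.lookup x i) (g i))"

lemma frag_lift_eq_sum_superset: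
  assumes "finite A" "Poly_Mapping.keys x \<subseteq> A"
  shows "frag_lift g x = (\<Sum>i\<in>A. zmult (Poly_Mapping.lookup x i) (g i))"
  unfolding frag_lift_def using assms
  by (intro sum.mono_neutral_left) (auto simp: in_keys_iff)

lemma additive_frag_lift:
  fixes g :: "'i \<Rightarrow> 'a::ab_group_add"
  shows "additive (frag_lift g)"
unfolding additive_def
proof (intro allI)
  fix x y :: "'i \<Rightarrow>\<^sub>0 int"
  let ?A = "Poly_Mapping.keys x \<union> Poly_Mapping.keys y"
  have "frag_lift g (x + y) = (\<Sum>i\<in>?A. zmult (Poly_Mapping.lookup (x + y) i) (g i))"
    using keys_add[of x y] by (intro frag_lift_eq_sum_superset) auto
  also have "\<dots> = (\<Sum>i\<in>?A. zmult (Poly_Mapping.lookup x i) (g i))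
                  + (\<Sum>i\<in>?A. zmult (Poly_Mapping.lookup y i) (g i))"
    by (simp add: lookup_add zmult_add sum.distrib)
  also have "\<dots> = frag_lift g x + frag_lift g y"
    by (subst (1 2) frag_lift_eq_sum_superset[where A = ?A]) auto
  finally show "frag_lift g (x + y) = frag_lift g x + frag_lift g y" .
qed

lemmas frag_lift_0 [simp] = additive_zero[OF additive_frag_lift]
  and frag_lift_add = additive_add[OF additive_frag_lift]
  and frag_lift_minus = additive_minus[OF additive_frag_lift]
  and frag_lift_diff = additive_diff[OF additive_frag_lift]

lemma frag_lift_single [simp]: "frag_lift g (Poly_Mapping.single i k) = zmult k (g i)"
  by (simp add: frag_lift_def)

lemma frag_lift_in_subgroup:
  assumes "0 \<in> S" and "\<And>a b. a \<in> S \<Longrightarrow> b \<in> S \<Longrightarrow> a - b \<in> S" and "\<And>i. g i \<in> S"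
  shows "frag_lift g x \<in> S"
  using subset_UNIV
  by (induction x rule: frag_induction) (simp_all add: assms frag_lift_diff)

lemma additive_frag_lift_comp:
  assumes "additive f"
  shows "f (frag_lift g x) = frag_lift (f \<circ> g) x"
  using subset_UNIV
  by (induction x rule: frag_induction) (simp_all add: frag_lift_diff assms additive_diff additive_zero)

subsection \<open>Additive maps out of a t-unital ring\<close>

definition balanced :: "('r::ring \<Rightarrow> 'r \<Rightarrow> 'a::ab_group_add) \<Rightarrow> bool" where
  "balanced G \<longleftrightarrow>
     (\<forall>r r' s. G (r + r') s = G r s + G r' s) \<and> (\<forall>r s s'. G r (s + s') = G r s + G r s') \<and>
     (\<forall>r a s. G (r * a) s = G r (a * s))"

lemma tens_mult_eq_frag_lift: "tens_mult = frag_lift (\<lambda>(r, s). r * s)"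
  by (simp add: fun_eq_iff tens_mult_def frag_lift_def case_prod_unfold)

lemma additive_tens_mult: "additive tens_mult"
  by (simp add: tens_mult_eq_frag_lift additive_frag_lift)

lemma tens_mult_single: "tens_mult (Poly_Mapping.single (r, s) 1) = r * s"
  by (simp add: tens_mult_eq_frag_lift)

lemma t_unital_tens_mult_surj:
  assumes "t_unital TYPE('r::ring)"
  obtains x where "tens_mult x = (y :: 'r)"
  using assms unfolding t_unital_def by blast

lemma additive_tens_mult_eq_frag_lift:
  fixes f :: "'r::ring \<Rightarrow> 'a::ab_group_add"
  assumes "additive f"
  shows "f (tens_mult x) = frag_lift (\<lambda>(r, s). f (r * s)) x"
  by (simp add: tens_mult_eq_frag_lift additive_frag_lift_comp[OF assms] comp_def case_prod_unfold)

lemma t_unital_additive_eqI: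
  fixes f g :: "'r::ring \<Rightarrow> 'a::ab_group_add"
  assumes "t_unital TYPE('r)" and "additive f" "additive g" and "\<And>r s. f (r * s) = g (r * s)"
  shows "f = g"
proof
  fix y :: 'r
  obtain x where "tens_mult x = y" by (rule t_unital_tens_mult_surj[OF assms(1), where y = y])
  then show "f y = g y"
    using additive_tens_mult_eq_frag_lift[OF assms(2), of x]
      additive_tens_mult_eq_frag_lift[OF assms(3), of x]
    by (simp add: assms(4))
qed

lemma t_unital_additive_in_subgroup:
  fixes f :: "'r::ring \<Rightarrow> 'a::ab_group_add"
  assumes "t_unital TYPE('r)" and "additive f"
    and "0 \<in> S" "\<And>a b. a \<in> S \<Longrightarrow> b \<in> S \<Longrightarrow> a - b \<in> S" and "\<And>r s. f (r * s) \<in> S"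
  shows "f y \<in> S"
proof -
  obtain x where "tens_mult x = y" by (rule t_unital_tens_mult_surj[OF assms(1), where y = y])
  moreover have "frag_lift (\<lambda>(r, s). f (r * s)) x \<in> S"
    by (rule frag_lift_in_subgroup[OF assms(3,4)]) (auto simp: assms(5) split: prod.splits)
  ultimately show ?thesis
    using additive_tens_mult_eq_frag_lift[OF assms(2)] by metis
qed

lemma frag_lift_tens_rel:
  assumes "balanced G" and "x \<in> tens_rel"
  shows "frag_lift (case_prod G) x = 0"
  using assms(2)
  by induction
    (use assms(1) in \<open>simp_all add: balanced_def frag_lift_add frag_lift_diff frag_lift_minus\<close>)

lemma t_unital_balanced_factor:
  fixes G :: "'r::ring \<Rightarrow> 'r \<Rightarrow> 'a::ab_group_add"
  assumes T: "t_unital TYPE('r)" and "balanced G"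
  obtains f where "additive f" and "\<And>r s. f (r * s) = G r s"
proof -
  define F where "F = frag_lift (case_prod G)"
  define f where "f y = F (SOME x. tens_mult x = y)" for y
  have f_tens_mult: "f (tens_mult x) = F x" for x
  proof -
    let ?x = "SOME x'. tens_mult x' = tens_mult x"
    have "tens_mult ?x = tens_mult x" by (rule someI) (rule refl)
    then have "?x - x \<in> tens_rel" using T by (simp add: t_unital_def)
    then have "F (?x - x) = 0" unfolding F_def by (rule frag_lift_tens_rel[OF assms(2)])
    then show ?thesis by (simp add: f_def F_def frag_lift_diff)
  qed
  have "additive f"
    unfolding additive_def
  proof (intro allI)
    fix a b :: 'r
    obtain x where x: "tens_mult x = a" by (rule t_unital_tens_mult_surj[OF T, where y = a])
    obtain y where y: "tens_mult y = b" by (rule t_unital_tens_mult_surj[OF T, where y = b])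
    have "f (a + b) = f (tens_mult (x + y))"
      unfolding x[symmetric] y[symmetric] by (simp add: additive_add[OF additive_tens_mult])
    also have "\<dots> = f a + f b"
      unfolding f_tens_mult x[symmetric] y[symmetric] by (simp add: F_def frag_lift_add)
    finally show "f (a + b) = f a + f b" .
  qed
  moreover have "f (r * s) = G r s" for r s
    using f_tens_mult[of "Poly_Mapping.single (r, s) 1"] by (simp add: tens_mult_single F_def)
  ultimately show ?thesis by (rule that)
qed

subsection \<open>Modules of the form Hom_R(R,P)\<close>

lemma mem_HomR_iff:
  "\<phi> \<in> HomR P act \<longleftrightarrow>
     (\<forall>r. \<phi> r \<in> P) \<and> (\<forall>a b. \<phi> (a + b) = \<phi> a + \<phi> b) \<and> (\<forall>a r. \<phi> (a * r) = act a (\<phi> r))"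
  by (simp add: HomR_def module_hom_def)

lemma additive_HomR: "\<phi> \<in> HomR P act \<Longrightarrow> additive \<phi>"
  by (simp add: mem_HomR_iff additive_def)

lemma homact_eq_eta: "\<phi> \<in> HomR P act \<Longrightarrow> homact a \<phi> = eta act (\<phi> a)"
  by (simp add: mem_HomR_iff homact_def eta_def fun_eq_iff)

lemma lmodule_act_zero:
  assumes "lmodule P act"
  shows "act a 0 = 0"
  using assms unfolding lmodule_def by (metis add_cancel_right_right)

lemma lmodule_act_minus:
  assumes "lmodule P act" and "x \<in> P"
  shows "act a (- x) = - act a x"
proof -
  have "act a (- x) + act a x = act a 0"
    using assms unfolding lmodule_def by (metis add.left_inverse)
  then show ?thesis
    using lmodule_act_zero[OF assms(1)] by (simp add: eq_neg_iff_add_eq_0)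
qed

lemma lmodule_HomR:
  assumes "lmodule P act"
  shows "lmodule (HomR P act) homact"
  using assms lmodule_act_zero[OF assms] lmodule_act_minus[OF assms] unfolding lmodule_def
  by (auto simp: mem_HomR_iff homact_def algebra_simps fun_eq_iff)

lemma module_hom_eta:
  assumes "lmodule P act"
  shows "module_hom P act (HomR P act) homact (eta act)"
  using assms unfolding lmodule_def module_hom_def
  by (auto simp: mem_HomR_iff eta_def homact_def fun_eq_iff)

lemma module_hom_postcomp:
  assumes "module_hom P act P' act' f"
  shows "module_hom (HomR P act) homact (HomR P' act') homact (\<lambda>\<phi>. f \<circ> \<phi>)"
  using assms unfolding module_hom_def
  by (auto simp: mem_HomR_iff homact_def fun_eq_iff)

lemma eta_natural:
  assumes "module_hom P act P' act' f" and "p \<in> P"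
  shows "f \<circ> eta act p = eta act' (f p)"
  using assms by (simp add: module_hom_def eta_def fun_eq_iff)

lemma module_hom_comp:
  assumes "module_hom L actL M actM f" and "module_hom M actM N actN g"
  shows "module_hom L actL N actN (g \<circ> f)"
  using assms by (simp add: module_hom_def)

lemma module_hom_the_inv_into:
  assumes M: "lmodule M actM" and f: "module_hom M actM N actN f" and bij: "bij_betw f M N"
  shows "module_hom N actN M actM (the_inv_into M f)"
proof -
  have inj: "inj_on f M" and onto: "f ` M = N"
    using bij by (auto simp: bij_betw_def)
  have inv_f: "the_inv_into M f (f x) = x" if "x \<in> M" for x
    using inj that by (rule the_inv_into_f_f)
  show ?thesis
    unfolding module_hom_def
  proof (intro conjI ballI allI)
    fix y y' assume "y \<in> N" "y' \<in> N"
    then obtain x x' where x: "x \<in> M" "y = f x" and x': "x' \<in> M" "y' = f x'"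
      using onto by blast
    then show "the_inv_into M f y \<in> M"
      by (simp add: inv_f)
    have "x + x' \<in> M" and "f (x + x') = y + y'"
      using M f x x' by (simp_all add: lmodule_def module_hom_def)
    then show "the_inv_into M f (y + y') = the_inv_into M f y + the_inv_into M f y'"
      using x x' by (metis inv_f)
    fix r
    have "actM r x \<in> M" and "f (actM r x) = actN r y"
      using M f x by (simp_all add: lmodule_def module_hom_def)
    then show "the_inv_into M f (actN r y) = actM r (the_inv_into M f y)"
      using x by (metis inv_f)
  qed
qed

lemma eta_homact_apply: "eta homact \<phi> a r = \<phi> (r * a)"
  by (simp add: eta_def homact_def)

lemma inj_on_eta_homact:
  assumes T: "t_unital TYPE('r::ring)"
  shows "inj_on (eta homact) (HomR P (act :: 'r \<Rightarrow> 'm::ab_group_add \<Rightarrow> 'm))"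
proof (rule inj_onI)
  fix \<phi> \<psi> assume \<phi>: "\<phi> \<in> HomR P act" and \<psi>: "\<psi> \<in> HomR P act"
    and eq: "eta homact \<phi> = eta homact \<psi>"
  have "\<phi> (r * a) = \<psi> (r * a)" for r a
    using fun_cong[OF fun_cong[OF eq, of a], of r] by (simp add: eta_homact_apply)
  then show "\<phi> = \<psi>"
    by (rule t_unital_additive_eqI[OF T additive_HomR[OF \<phi>] additive_HomR[OF \<psi>]])
qed

lemma HomR_HomR_subset_eta_homact_image:
  fixes act :: "'r::ring \<Rightarrow> 'm::ab_group_add \<Rightarrow> 'm"
  assumes T: "t_unital TYPE('r)" and P: "lmodule P act"
  shows "HomR (HomR P act) homact \<subseteq> eta homact ` HomR P act"
proof
  fix \<Psi> assume \<Psi>: "\<Psi> \<in> HomR (HomR P act) homact"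
  have \<Psi>_apply: "\<Psi> a \<in> HomR P act" "\<Psi> (b * a) r = \<Psi> a (r * b)" for a b r
    using \<Psi> by (auto simp: mem_HomR_iff homact_def)
  have "balanced (\<lambda>r s. \<Psi> s r)"
    using \<Psi> \<Psi>_apply by (simp add: balanced_def mem_HomR_iff)
  then obtain \<phi> :: "'r \<Rightarrow> 'm" where \<phi>_add: "additive \<phi>" and \<phi>_prod: "\<And>r s. \<phi> (r * s) = \<Psi> s r"
    using t_unital_balanced_factor[OF T] by blast
  have \<phi>_in: "\<phi> y \<in> P" for y
  proof (rule t_unital_additive_in_subgroup[OF T \<phi>_add])
    show "0 \<in> P" using P by (simp add: lmodule_def)
    show "a - b \<in> P" if "a \<in> P" "b \<in> P" for a b
      using P that unfolding lmodule_def diff_conv_add_uminus by blast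
    show "\<phi> (r * s) \<in> P" for r s
      using \<Psi>_apply(1)[of s] by (simp add: \<phi>_prod mem_HomR_iff)
  qed
  have \<phi>_linear: "(\<lambda>y. \<phi> (b * y)) = (\<lambda>y. act b (\<phi> y))" for b
  proof (rule t_unital_additive_eqI[OF T])
    show "additive (\<lambda>y. \<phi> (b * y))"
      using \<phi>_add by (simp add: additive_def distrib_left)
    show "additive (\<lambda>y. act b (\<phi> y))"
      using \<phi>_add \<phi>_in P by (simp add: additive_def lmodule_def)
    show "\<phi> (b * (r * s)) = act b (\<phi> (r * s))" for r s
      using \<Psi>_apply(1)[of s] by (simp add: \<phi>_prod mult.assoc[symmetric] mem_HomR_iff)
  qed
  have "\<phi> \<in> HomR P act"
    using \<phi>_add \<phi>_in fun_cong[OF \<phi>_linear] by (simp add: mem_HomR_iff additive_def)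
  moreover have "eta homact \<phi> = \<Psi>"
    by (simp add: fun_eq_iff eta_homact_apply \<phi>_prod)
  ultimately show "\<Psi> \<in> eta homact ` HomR P act" by blast
qed

lemma c_unital_HomR:
  assumes "t_unital TYPE('r::ring)" and "lmodule P (act :: 'r \<Rightarrow> 'm::ab_group_add \<Rightarrow> 'm)"
  shows "c_unital (HomR P act) homact"
  using lmodule_HomR[OF assms(2)] module_hom_eta[OF lmodule_HomR[OF assms(2)]]
    inj_on_eta_homact[OF assms(1)] HomR_HomR_subset_eta_homact_image[OF assms]
  unfolding c_unital_def bij_betw_def module_hom_def by blast

lemma eta_module_hom_apply:
  assumes "module_hom (HomR P act) homact Q actQ g" and "\<phi> \<in> HomR P act"
  shows "eta actQ (g \<phi>) = g \<circ> eta act \<circ> \<phi>"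
proof
  fix r
  have "eta actQ (g \<phi>) r = g (homact r \<phi>)"
    using assms by (simp add: eta_def module_hom_def)
  also have "\<dots> = g (eta act (\<phi> r))"
    using homact_eq_eta[OF assms(2)] by simp
  finally show "eta actQ (g \<phi>) r = (g \<circ> eta act \<circ> \<phi>) r" by simp
qed

lemma HomR_universal:
  fixes act :: "'r::ring \<Rightarrow> 'm::ab_group_add \<Rightarrow> 'm" and actQ :: "'r \<Rightarrow> 'q::ab_group_add \<Rightarrow> 'q"
  assumes P: "lmodule P act" and Q: "c_unital Q actQ" and f: "module_hom P act Q actQ f"
  shows "\<exists>g. module_hom (HomR P act) homact Q actQ g
              \<and> (\<forall>p\<in>P. g (eta act p) = f p)
              \<and> (\<forall>g'. module_hom (HomR P act) homact Q actQ g'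
                     \<and> (\<forall>p\<in>P. g' (eta act p) = f p)
                     \<longrightarrow> (\<forall>\<phi>\<in>HomR P act. g' \<phi> = g \<phi>))"
proof -
  have Q_mod: "lmodule Q actQ" and bij: "bij_betw (eta actQ) Q (HomR Q actQ)"
    using Q by (auto simp: c_unital_def)
  define g where "g = the_inv_into Q (eta actQ) \<circ> (\<lambda>\<phi>. f \<circ> \<phi>)"
  have "module_hom (HomR P act) homact Q actQ g"
    unfolding g_def using module_hom_postcomp[OF f]
    by (rule module_hom_comp) (rule module_hom_the_inv_into[OF Q_mod module_hom_eta[OF Q_mod] bij])
  moreover have g_eq: "g \<phi> = y" if "y \<in> Q" and "eta actQ y = f \<circ> \<phi>" for \<phi> y
    using that bij by (simp add: g_def bij_betw_def the_inv_into_f_eq)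
  moreover have "g (eta act p) = f p" if "p \<in> P" for p
    using that f by (intro g_eq) (simp_all add: eta_natural module_hom_def)
  moreover have "g' \<phi> = g \<phi>"
    if g': "module_hom (HomR P act) homact Q actQ g'" and "\<forall>p\<in>P. g' (eta act p) = f p"
      and \<phi>: "\<phi> \<in> HomR P act" for g' \<phi>
  proof -
    have "eta actQ (g' \<phi>) = f \<circ> \<phi>"
      using that eta_module_hom_apply[OF g' \<phi>] by (auto simp: fun_eq_iff mem_HomR_iff)
    then show ?thesis
      using g' \<phi> by (intro g_eq[symmetric]) (simp_all add: module_hom_def)
  qed
  ultimately show ?thesis by blast
qed

theorem lemma5p3:
  fixes P :: "'m::ab_group_add set" and actP :: "'r::ring \<Rightarrow> 'm \<Rightarrow> 'm"
  assumes "t_unital TYPE('r)"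
    and "lmodule P actP"
  shows "c_unital (HomR P actP) homact
     \<and> module_hom P actP (HomR P actP) homact (eta actP)
     \<and> (\<forall>(P' :: 'n::ab_group_add set) actP' f.
           lmodule P' actP' \<and> module_hom P actP P' actP' f \<longrightarrow>
             module_hom (HomR P actP) homact (HomR P' actP') homact (\<lambda>\<phi>. f \<circ> \<phi>)
             \<and> (\<forall>p\<in>P. f \<circ> eta actP p = eta actP' (f p)))
     \<and> (\<forall>(Q :: 'q::ab_group_add set) actQ f.
           c_unital Q actQ \<and> module_hom P actP Q actQ f \<longrightarrow>
             (\<exists>g. module_hom (HomR P actP) homact Q actQ g
                  \<and> (\<forall>p\<in>P. g (eta actP p) = f p)
                  \<and> (\<forall>g'. module_hom (HomR P actP) homact Q actQ g'
                         \<and> (\<forall>p\<in>P. g' (eta actP p) = f p)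
                         \<longrightarrow> (\<forall>\<phi>\<in>HomR P actP. g' \<phi> = g \<phi>))))"
  using c_unital_HomR[OF assms] module_hom_eta[OF assms(2)] module_hom_postcomp eta_natural
    HomR_universal[OF assms(2)]
  by blast

end
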